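(* Let $X$ be a finite set, $k$ an integer with $5<k<|X|-5$, $\mathfrak{C}$ a nonempty symmetric family of choice functions for $\binom{X}{k}$, and $\mathcal{F}$ the set of simple averaging functions for $\mathfrak{C}$. (1) If $f_{r;1,2}\in\mathcal{F}$ then $f_{r;\ell,k'}\in\mathcal{F}$ for all $\ell\ne k'$ in $\{1,\dots,r\}$. (2) If $f_{r;1,2}\in\mathcal{F}$ and $r=r(\mathcal{F})\ge 3$, then $f_{r+1;1,2}\in\mathcal{F}$.
   Context: $\binom{X}{k}=\{Y\subseteq X:|Y|=k\}$; choice functions $c$ satisfy $c(Y)\in Y$. Symmetric: closed under $c\mapsto \pi*c$, $(\pi*c)(Y)=\pi^{-1}(c(\pi(Y)))$ for permutations $\pi$ of $X$. $\mathcal{F}_{[r]}$: functions $f:X^r\to X$ with $f(a,\dots,a)=a$ such that for all $c_1,\dots,c_r\in\mathfrak{C}$, $Y\mapsto f(c_1(Y),\dots,c_r(Y))$ is in $\mathfrak{C}$; $\mathcal{F}=\bigcup_r\mathcal{F}_{[r]}$. A monarchy is a projection $f(\bar x)=x_t$. $r(\mathcal{F})=\min\{r:\text{some } f\in\mathcal{F}_{[r]}\text{ is not a monarchy}\}$. For $\ell\ne k'$ in $\{1,\dots,r\}$, $f_{r;\ell,k'}:X^r\to X$ is defined by $f_{r;\ell,k'}(\bar x)=x_\ell$ if $\bar x$ has a repetition and $f_{r;\ell,k'}(\bar x)=x_{k'}$ otherwise. *)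

theory Defs
  imports "HOL-Combinatorics.Permutations"
begin

definition ksubsets :: "'a set \<Rightarrow> nat \<Rightarrow> 'a set set" where
  "ksubsets X k = {Y. Y \<subseteq> X \<and> card Y = k}"

definition choice_fun :: "'a set \<Rightarrow> nat \<Rightarrow> ('a set \<Rightarrow> 'a) \<Rightarrow> bool" where
  "choice_fun X k c \<longleftrightarrow> (\<forall>Y\<in>ksubsets X k. c Y \<in> Y) \<and> c \<in> extensional (ksubsets X k)"

definition perm_act :: "'a set \<Rightarrow> nat \<Rightarrow> ('a \<Rightarrow> 'a) \<Rightarrow> ('a set \<Rightarrow> 'a) \<Rightarrow> ('a set \<Rightarrow> 'a)" where
  "perm_act X k \<pi> c = (\<lambda>Y. if Y \<in> ksubsets X k then inv \<pi> (c (\<pi> ` Y)) else undefined)"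

definition symmetric_family :: "'a set \<Rightarrow> nat \<Rightarrow> ('a set \<Rightarrow> 'a) set \<Rightarrow> bool" where
  "symmetric_family X k C \<longleftrightarrow> (\<forall>c\<in>C. choice_fun X k c) \<and>
     (\<forall>\<pi> c. \<pi> permutes X \<and> c \<in> C \<longrightarrow> perm_act X k \<pi> c \<in> C)"

text \<open>X^r as lists of length r\<close>
definition tuples :: "'a set \<Rightarrow> nat \<Rightarrow> 'a list set" where
  "tuples X r = {xs. length xs = r \<and> set xs \<subseteq> X}"

definition avg_fun :: "'a set \<Rightarrow> nat \<Rightarrow> ('a set \<Rightarrow> 'a) set \<Rightarrow> nat \<Rightarrow> ('a list \<Rightarrow> 'a) \<Rightarrow> bool" where
  "avg_fun X k C r f \<longleftrightarrow> 1 \<le> r \<and>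
     (\<forall>xs\<in>tuples X r. f xs \<in> X) \<and>
     (\<forall>a\<in>X. f (replicate r a) = a) \<and>
     (\<forall>cs. length cs = r \<and> set cs \<subseteq> C \<longrightarrow>
        (\<lambda>Y. if Y \<in> ksubsets X k then f (map (\<lambda>c. c Y) cs) else undefined) \<in> C)"

definition monarchy :: "'a set \<Rightarrow> nat \<Rightarrow> ('a list \<Rightarrow> 'a) \<Rightarrow> bool" where
  "monarchy X r f \<longleftrightarrow> (\<exists>t<r. \<forall>xs\<in>tuples X r. f xs = xs ! t)"

definition rF :: "'a set \<Rightarrow> nat \<Rightarrow> ('a set \<Rightarrow> 'a) set \<Rightarrow> nat" where
  "rF X k C = (LEAST r. 1 \<le> r \<and> (\<exists>f. avg_fun X k C r f \<and> \<not> monarchy X r f))"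

text \<open>f_{r;l,k'} with 1-based indices l, k' (the arity r is the list length)\<close>
definition fsel :: "nat \<Rightarrow> nat \<Rightarrow> 'a list \<Rightarrow> 'a" where
  "fsel l k' xs = (if distinct xs then xs ! (k' - 1) else xs ! (l - 1))"

end

theory Submission
  imports Defs
begin

text \<open>
  Both parts are closure properties of the operations preserving \<open>C\<close>: they are closed
  under reindexing their arguments and under substitution into one another. For (1),
  \<open>f(r;l,k')\<close> is \<open>f(r;1,2)\<close> with its arguments permuted, and permuting a tuple does not
  change whether it has a repetition. For (2), when \<open>r \<ge> 3\<close> and with arguments indexed from 0,
  \<open>f(r+1;1,2)(x0,...,xr) = f(r;1,2)(x0, f(r;1,2)(x0,...,x(r-1)), f(r;2,1)(xr,x0,x2,...,x(r-1)), x2,...,x(r-2))\<close>: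
  if the outer tuple is repetition free then so is \<open>x0,...,xr\<close> and both sides are \<open>x1\<close>;
  otherwise both sides are \<open>x0\<close>.
  Neither argument uses finiteness of \<open>X\<close>, the bounds on \<open>k\<close>, symmetry of \<open>C\<close> or
  the minimality \<open>r = r(F)\<close>.
\<close>

definition aggregate :: "'a set \<Rightarrow> nat \<Rightarrow> ('a list \<Rightarrow> 'a) \<Rightarrow> ('a set \<Rightarrow> 'a) list \<Rightarrow> 'a set \<Rightarrow> 'a" where
  "aggregate X k f cs = (\<lambda>Y. if Y \<in> ksubsets X k then f (map (\<lambda>c. c Y) cs) else undefined)"

definition preserves :: "'a set \<Rightarrow> nat \<Rightarrow> ('a set \<Rightarrow> 'a) set \<Rightarrow> nat \<Rightarrow> ('a list \<Rightarrow> 'a) \<Rightarrow> bool" where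
  "preserves X k C r f \<longleftrightarrow> (\<forall>cs. length cs = r \<and> set cs \<subseteq> C \<longrightarrow> aggregate X k f cs \<in> C)"

lemma avg_fun_iff_preserves:
  "avg_fun X k C r f \<longleftrightarrow> 1 \<le> r \<and> (\<forall>xs\<in>tuples X r. f xs \<in> X) \<and>
     (\<forall>a\<in>X. f (replicate r a) = a) \<and> preserves X k C r f"
  by (simp add: avg_fun_def preserves_def aggregate_def)

lemma preserves_cong:
  assumes "preserves X k C r f" and "\<And>xs. length xs = r \<Longrightarrow> f xs = g xs"
  shows "preserves X k C r g"
  unfolding preserves_def
proof (intro allI impI)
  fix cs assume cs: "length cs = r \<and> set cs \<subseteq> C"
  have "aggregate X k g cs = aggregate X k f cs"
    using cs assms(2) by (simp add: aggregate_def fun_eq_iff)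
  then show "aggregate X k g cs \<in> C"
    using cs assms(1) by (simp add: preserves_def)
qed

lemma preserves_reindex:
  assumes "preserves X k C (length ixs) f" and "\<forall>i\<in>set ixs. i < m"
  shows "preserves X k C m (\<lambda>xs. f (map ((!) xs) ixs))"
  unfolding preserves_def
proof (intro allI impI)
  fix cs assume cs: "length cs = m \<and> set cs \<subseteq> C"
  have "aggregate X k (\<lambda>xs. f (map ((!) xs) ixs)) cs = aggregate X k f (map ((!) cs) ixs)"
    using cs assms(2) by (auto simp: aggregate_def cong: map_cong)
  moreover have "set (map ((!) cs) ixs) \<subseteq> C"
    using cs assms(2) by auto
  ultimately show "aggregate X k (\<lambda>xs. f (map ((!) xs) ixs)) cs \<in> C"
    using assms(1) by (simp add: preserves_def)
qed

lemma preserves_compose_prefix: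
  assumes "preserves X k C (length gs + m) f" and "\<forall>g\<in>set gs. preserves X k C m g"
  shows "preserves X k C m (\<lambda>xs. f (map (\<lambda>g. g xs) gs @ xs))"
  unfolding preserves_def
proof (intro allI impI)
  fix cs assume cs: "length cs = m \<and> set cs \<subseteq> C"
  have "aggregate X k (\<lambda>xs. f (map (\<lambda>g. g xs) gs @ xs)) cs
      = aggregate X k f (map (\<lambda>g. aggregate X k g cs) gs @ cs)"
    by (auto simp: aggregate_def comp_def)
  moreover have "set (map (\<lambda>g. aggregate X k g cs) gs) \<subseteq> C"
    using cs assms(2) by (auto simp: preserves_def)
  ultimately show "aggregate X k (\<lambda>xs. f (map (\<lambda>g. g xs) gs @ xs)) cs \<in> C"
    using cs assms(1) by (simp add: preserves_def)
qed

lemma fsel_in_set: "l \<in> {1..length xs} \<Longrightarrow> k' \<in> {1..length xs} \<Longrightarrow> fsel l k' xs \<in> set xs"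
  by (auto simp: fsel_def)

lemma fsel_replicate:
  assumes "2 \<le> r" and "l \<in> {1..r}"
  shows "fsel l k' (replicate r a) = a"
proof -
  have "\<not> distinct (replicate r a)"
    using assms(1) by (cases r) (auto simp: Suc_le_eq)
  then show ?thesis
    using assms(2) by (auto simp: fsel_def)
qed

lemma avg_fun_fsel_iff:
  assumes "2 \<le> r" and "l \<in> {1..r}" and "k' \<in> {1..r}"
  shows "avg_fun X k C r (fsel l k') \<longleftrightarrow> preserves X k C r (fsel l k')"
proof -
  have "fsel l k' xs \<in> X" if "xs \<in> tuples X r" for xs
    using that assms(2,3) fsel_in_set[of l xs k'] by (auto simp: tuples_def)
  then show ?thesis
    using assms(1) fsel_replicate[OF assms(1,2)] by (auto simp: avg_fun_iff_preserves)
qed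

lemma distinct_map_nth_iff:
  assumes "distinct ixs" and "set ixs = {..<length xs}"
  shows "distinct (map ((!) xs) ixs) \<longleftrightarrow> distinct xs"
proof -
  have "distinct (map ((!) xs) ixs) \<longleftrightarrow> inj_on ((!) xs) {..<length xs}"
    using assms by (simp add: distinct_map)
  also have "\<dots> \<longleftrightarrow> distinct xs"
    using distinct_map[of "(!) xs" "[0..<length xs]"] by (simp add: map_nth lessThan_atLeast0)
  finally show ?thesis .
qed

lemma fsel_eq_fsel_reindex:
  assumes "distinct (i # j # ixs)" and "set (i # j # ixs) = {..<length xs}"
  shows "fsel (Suc i) (Suc j) xs = fsel 1 2 (map ((!) xs) (i # j # ixs))"
  using distinct_map_nth_iff[OF assms] by (simp add: fsel_def)

lemma preserves_fsel_reindex: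
  assumes "preserves X k C r (fsel 1 2)" and "i < r" and "j < r" and "i \<noteq> j"
  shows "preserves X k C r (fsel (Suc i) (Suc j))"
proof -
  define rest where "rest = filter (\<lambda>n. n \<noteq> i \<and> n \<noteq> j) [0..<r]"
  have distinct: "distinct (i # j # rest)" and set: "set (i # j # rest) = {..<r}"
    using assms(2-4) by (auto simp: rest_def)
  then have "length (i # j # rest) = r"
    using distinct_card by fastforce
  then have "preserves X k C r (\<lambda>xs. fsel 1 2 (map ((!) xs) (i # j # rest)))"
    using preserves_reindex[of X k C "i # j # rest" "fsel 1 2" r] assms(1) set by auto
  then show ?thesis
  proof (rule preserves_cong)
    fix xs :: "'a list" assume "length xs = r"
    then show "fsel 1 2 (map ((!) xs) (i # j # rest)) = fsel (Suc i) (Suc j) xs"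
      using fsel_eq_fsel_reindex[of i j rest xs] distinct set by simp
  qed
qed

lemma map_nth_upt_append:
  "map ((!) (ps @ qs @ rs)) [length ps..<length ps + length qs] = qs"
  by (rule map_upt_eqI) (simp_all add: nth_append)

lemma fsel_superposition:
  "fsel 1 2 (a # b # ws @ [y, z]) =
     fsel 1 2 (a # fsel 1 2 (a # b # ws @ [y]) # fsel 2 1 (z # a # ws @ [y]) # ws)"
  by (auto simp: fsel_def)

lemma preserves_fsel_Suc:
  assumes "preserves X k C r (fsel 1 2)" and "3 \<le> r"
  shows "preserves X k C (Suc r) (fsel 1 2)"
proof -
  define g1 where "g1 xs = fsel 1 2 (map ((!) xs) [0..<r])" for xs :: "'a list"
  define g2 where "g2 xs = fsel 2 1 (map ((!) xs) (r # 0 # [2..<r]))" for xs :: "'a list"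
  \<comment> \<open>\<open>h\<close> reads \<open>x0, g1 xs, g2 xs, x2, ..., x(r-2)\<close> off the list \<open>g1 xs # g2 xs # xs\<close>\<close>
  define h where "h ys = fsel 1 2 (map ((!) ys) (2 # 0 # 1 # [4..<Suc r]))" for ys :: "'a list"
  have "preserves X k C (Suc r) g1"
    unfolding g1_def using preserves_reindex[of X k C "[0..<r]"] assms(1) by simp
  moreover have "preserves X k C (Suc r) g2"
  proof -
    have "preserves X k C r (fsel 2 1)"
      using preserves_fsel_reindex[OF assms(1), of 1 0] assms(2) by (simp add: numeral_2_eq_2)
    moreover have "length (r # 0 # [2..<r]) = r"
      using assms(2) by simp
    ultimately show ?thesis
      unfolding g2_def using preserves_reindex[of X k C "r # 0 # [2..<r]" "fsel 2 1" "Suc r"] by simp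
  qed
  moreover have "preserves X k C (length [g1, g2] + Suc r) h"
  proof -
    have "length (2 # 0 # 1 # [4..<Suc r]) = r"
      using assms(2) by (simp del: upt_Suc)
    then have "preserves X k C (length (2 # 0 # 1 # [4..<Suc r])) (fsel 1 2)"
      using assms(1) by (simp only:)
    then show ?thesis
      unfolding h_def by (rule preserves_reindex) auto
  qed
  ultimately have "preserves X k C (Suc r) (\<lambda>xs. h (map (\<lambda>g. g xs) [g1, g2] @ xs))"
    using preserves_compose_prefix[of X k C "[g1, g2]" "Suc r" h] by simp
  then show ?thesis
  proof (rule preserves_cong)
    fix xs :: "'a list" assume "length xs = Suc r"
    then obtain a b zs where "xs = a # b # zs" and "length zs = r - 1"
      using assms(2) by (cases xs; cases "tl xs") auto
    moreover obtain ws y z where "zs = ws @ [y, z]"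
      using \<open>length zs = r - 1\<close> assms(2)
      by (cases zs rule: rev_exhaust; cases "butlast zs" rule: rev_exhaust) auto
    ultimately have xs: "xs = a # b # ws @ [y, z]" and r: "r = Suc (Suc (Suc (length ws)))"
      using assms(2) by auto
    have "g1 xs = fsel 1 2 (a # b # ws @ [y])"
      using map_nth_upt_append[of "[]" "a # b # ws @ [y]" "[z]"] xs r
      by (simp add: g1_def eval_nat_numeral del: upt_Suc)
    moreover have "g2 xs = fsel 2 1 (z # a # ws @ [y])"
      using map_nth_upt_append[of "[a, b]" "ws @ [y]" "[z]"] xs r
      by (simp add: g2_def nth_append eval_nat_numeral del: upt_Suc)
    moreover have "h (map (\<lambda>g. g xs) [g1, g2] @ xs) = fsel 1 2 (a # g1 xs # g2 xs # ws)"
      using map_nth_upt_append[of "[g1 xs, g2 xs, a, b]" ws "[y, z]"] xs r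
      by (simp add: h_def eval_nat_numeral del: upt_Suc)
    ultimately show "h (map (\<lambda>g. g xs) [g1, g2] @ xs) = fsel 1 2 xs"
      unfolding xs by (simp only: fsel_superposition)
  qed
qed

theorem claim2p7:
  fixes X :: "'a set" and k :: nat and C :: "('a set \<Rightarrow> 'a) set"
  assumes "finite X" and "5 < k" and "k + 5 < card X"
    and "C \<noteq> {}" and "symmetric_family X k C"
  shows "(\<forall>r. 2 \<le> r \<and> avg_fun X k C r (fsel 1 2) \<longrightarrow>
            (\<forall>l k'. l \<in> {1..r} \<and> k' \<in> {1..r} \<and> l \<noteq> k' \<longrightarrow> avg_fun X k C r (fsel l k')))
       \<and> (\<forall>r. 2 \<le> r \<and> avg_fun X k C r (fsel 1 2) \<and> r = rF X k C \<and> 3 \<le> r \<longrightarrow>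
            avg_fun X k C (r + 1) (fsel 1 2))"
proof (intro conjI allI impI; elim conjE)
  fix r l k'
  assume r: "2 \<le> r" and f12: "avg_fun X k C r (fsel 1 2)"
    and l: "l \<in> {1..r}" and k': "k' \<in> {1..r}" and "l \<noteq> k'"
  have "preserves X k C r (fsel 1 2)"
    using f12 avg_fun_fsel_iff[of r 1 2 X k C] r by simp
  then have "preserves X k C r (fsel (Suc (l - 1)) (Suc (k' - 1)))"
    by (rule preserves_fsel_reindex) (use l k' \<open>l \<noteq> k'\<close> in auto)
  then show "avg_fun X k C r (fsel l k')"
    using avg_fun_fsel_iff[OF r l k', of X k C] l k' by simp
next
  fix r
  assume "2 \<le> r" and "avg_fun X k C r (fsel 1 2)" and "3 \<le> r"
  then have "preserves X k C (Suc r) (fsel 1 2)"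
    using preserves_fsel_Suc avg_fun_fsel_iff[of r 1 2 X k C] by auto
  then show "avg_fun X k C (r + 1) (fsel 1 2)"
    using avg_fun_fsel_iff[of "Suc r" 1 2 X k C] \<open>2 \<le> r\<close> by simp
qed

end
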